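(* For $c\in\mathbb{R}$ and $c_1\in\mathbb{R}\setminus\{0,-1\}$ consider the Type $\mathcal{A}$ models $\mathcal{M}_1^1=\mathcal{M}(-1,0,1,0,0,2)$, $\mathcal{M}_2^1(c_1)=\mathcal{M}(-1,0,c_1,0,0,1+2c_1)$, $\mathcal{M}_3^1(c_1)=\mathcal{M}(0,0,c_1,0,0,1+2c_1)$, $\mathcal{M}_4^1(c)=\mathcal{M}(0,0,1,0,c,2)$, $\mathcal{M}_5^1(c)=\mathcal{M}(1,0,0,0,1+c^2,2c)$. Their isotropy groups are: (1) $\mathcal{I}(\mathcal{M}_1^1)=\{\mathrm{id}\}$. (2) $\mathcal{I}(\mathcal{M}_2^1(c_1))=\{\mathrm{id}\}$ if $c_1\neq-\frac12$. (3) $\mathcal{I}(\mathcal{M}_2^1(-\frac12))=\{\mathrm{id},T\}$ where $T(x^1,x^2)=(x^1+x^2,-x^2)$. (4) $\mathcal{I}(\mathcal{M}_3^1(c_1))=\{T: T(x^1,x^2)=(v^{-1}x^1,x^2),\ v\in\mathbb{R}\setminus\{0\}\}$. (5) $\mathcal{I}(\mathcal{M}_4^1(c))=\{T:T(x^1,x^2)=(x^1-wx^2,x^2),\ w\in\mathbb{R}\}$ if $c\neq0$. (6) $\mathcal{I}(\mathcal{M}_4^1(0))=\{T:T(x^1,x^2)=(v^{-1}(x^1-wx^2),x^2),\ w\in\mathbb{R},\ v\in\mathbb{R}\setminus\{0\}\}$. (7) $\mathcal{I}(\mathcal{M}_5^1(c))=\{\mathrm{id}\}$ if $c\neq0$.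 (8) $\mathcal{I}(\mathcal{M}_5^1(0))=\{\mathrm{id},T\}$ where $T(x^1,x^2)=(x^1,-x^2)$.
   Context: For $(a,b,c,d,e,f)\in\mathbb{R}^6$, the Type $\mathcal{A}$ model $\mathcal{M}(a,b,c,d,e,f)$ is $(\mathbb{R}^2,\nabla)$ with torsion free connection with constant Christoffel symbols ($\nabla_{\partial_{x^i}}\partial_{x^j}=\Gamma_{ij}{}^k\partial_{x^k}$) $\Gamma_{11}{}^1=a$, $\Gamma_{11}{}^2=b$, $\Gamma_{12}{}^1=\Gamma_{21}{}^1=c$, $\Gamma_{12}{}^2=\Gamma_{21}{}^2=d$, $\Gamma_{22}{}^1=e$, $\Gamma_{22}{}^2=f$. The group $\operatorname{GL}(2,\mathbb{R})$ acts on Type $\mathcal{A}$ models by linear changes of coordinates $T$ (pulling back the connection, which again has constant Christoffel symbols). The isotropy group of a model $\mathcal{M}$ is $\mathcal{I}(\mathcal{M})=\{T\in\operatorname{GL}(2,\mathbb{R}): T^*\mathcal{M}=\mathcal{M}\}$. *)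

theory Defs
  imports "HOL-Analysis.Analysis"
begin

text \<open>Christoffel symbols of a Type A model: Gamma i j k = Gamma_{ij}^k, indices in type 2
  (index 1 = x^1, index 2 = x^2).\<close>
type_synonym christoffel = "2 \<Rightarrow> 2 \<Rightarrow> 2 \<Rightarrow> real"

definition typeA :: "real \<Rightarrow> real \<Rightarrow> real \<Rightarrow> real \<Rightarrow> real \<Rightarrow> real \<Rightarrow> christoffel" where
  "typeA a b c d e f = (\<lambda>i j k.
     if i = 1 \<and> j = 1 then (if k = 1 then a else b)
     else if i = 2 \<and> j = 2 then (if k = 1 then e else f)
     else (if k = 1 then c else d))"

text \<open>2x2 matrix with rows (p,q), (r,s); acts on column vectors: T(x) = T *v x.\<close>
definition mat2 :: "real \<Rightarrow> real \<Rightarrow> real \<Rightarrow> real \<Rightarrow> real^2^2" where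
  "mat2 p q r s = (\<chi> i j. if i = 1 then (if j = 1 then p else q) else (if j = 1 then r else s))"

text \<open>Pullback of a connection with constant Christoffel symbols under the linear
  change of coordinates y = T x:  Gamma'_{ij}^k = sum (T^{-1})^k_c Gamma_{ab}^c T^a_i T^b_j.\<close>
definition pullback :: "real^2^2 \<Rightarrow> christoffel \<Rightarrow> christoffel" where
  "pullback T G = (\<lambda>i j k. \<Sum>a\<in>UNIV. \<Sum>b\<in>UNIV. \<Sum>c\<in>UNIV.
      (matrix_inv T) $ k $ c * G a b c * T $ a $ i * T $ b $ j)"

definition isotropy :: "christoffel \<Rightarrow> (real^2^2) set" where
  "isotropy G = {T. invertible T \<and> pullback T G = G}"

end

theory Submission
  imports Defs
begin

text \<open>T is an affine symmetry of a Type A model exactly when the bilinear map \<Gamma> is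
  T-equivariant, \<Gamma>(T x, T y) = T \<Gamma>(x, y); for T with rows (p, q), (r, s) this is a system of six
  quadratic equations in p, q, r, s. For each model these equations first force r = 0; then
  det T = p s \<noteq> 0 allows cancelling p or s in the remaining equations, which determine s, p
  and q.\<close>

lemma invertible_matrix_inv:
  fixes T :: "'a::semiring_1^'n^'m"
  assumes "invertible T"
  shows "T ** matrix_inv T = mat 1" and "matrix_inv T ** T = mat 1"
proof -
  have "T ** matrix_inv T = mat 1 \<and> matrix_inv T ** T = mat 1"
    using assms unfolding invertible_def matrix_inv_def by (rule someI_ex)
  then show "T ** matrix_inv T = mat 1" and "matrix_inv T ** T = mat 1" by auto
qed

lemma pullback_eq_self_iff:
  assumes "invertible T"
  shows "pullback T G = G \<longleftrightarrow>
    (\<forall>i j m. (\<Sum>a\<in>UNIV. \<Sum>b\<in>UNIV. G a b m * T $ a $ i * T $ b $ j) = (\<Sum>k\<in>UNIV. T $ m $ k * G i j k))"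
proof -
  define \<Gamma>T where "\<Gamma>T i j = (\<chi> c. \<Sum>a\<in>UNIV. \<Sum>b\<in>UNIV. G a b c * T $ a $ i * T $ b $ j)" for i j
  define \<Gamma> where "\<Gamma> i j = (\<chi> k. G i j k)" for i j
  have pullback_eq: "pullback T G i j k = (matrix_inv T *v \<Gamma>T i j) $ k" for i j k
    unfolding pullback_def \<Gamma>T_def by (simp add: matrix_vector_mult_def sum_2 algebra_simps)
  have "pullback T G = G \<longleftrightarrow> (\<forall>i j. matrix_inv T *v \<Gamma>T i j = \<Gamma> i j)"
    by (simp add: fun_eq_iff vec_eq_iff pullback_eq \<Gamma>_def)
  also have "\<dots> \<longleftrightarrow> (\<forall>i j. \<Gamma>T i j = T *v \<Gamma> i j)"
    by (metis invertible_matrix_inv[OF assms] matrix_vector_mul_assoc matrix_vector_mul_lid)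
  finally show ?thesis
    by (simp add: vec_eq_iff matrix_vector_mult_def \<Gamma>T_def \<Gamma>_def)
qed

lemma mat2_nth [simp]:
  "mat2 p q r s $ 1 $ 1 = p" "mat2 p q r s $ 1 $ 2 = q"
  "mat2 p q r s $ 2 $ 1 = r" "mat2 p q r s $ 2 $ 2 = s"
  unfolding mat2_def by simp_all

lemma mat2_eq_iff [simp]:
  "mat2 p q r s = mat2 p' q' r' s' \<longleftrightarrow> p = p' \<and> q = q' \<and> r = r' \<and> s = s'"
  unfolding mat2_def by (auto simp: vec_eq_iff forall_2)

lemma mat2_cases: obtains p q r s where "(T::real^2^2) = mat2 p q r s"
proof
  show "T = mat2 (T$1$1) (T$1$2) (T$2$1) (T$2$2)"
    unfolding mat2_def by (simp add: vec_eq_iff forall_2)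
qed

lemma mat2_set_eqI:
  assumes "\<And>p q r s. mat2 p q r s \<in> A \<longleftrightarrow> mat2 p q r s \<in> B"
  shows "A = B"
  by (metis assms mat2_cases set_eqI)

lemma mat_1_eq_mat2: "(mat 1 :: real^2^2) = mat2 1 0 0 1"
  unfolding mat2_def by (simp add: vec_eq_iff forall_2 mat_def)

lemma typeA_nth [simp]:
  "typeA a b c d e f 1 1 1 = a" "typeA a b c d e f 1 1 2 = b"
  "typeA a b c d e f 1 2 1 = c" "typeA a b c d e f 1 2 2 = d"
  "typeA a b c d e f 2 1 1 = c" "typeA a b c d e f 2 1 2 = d"
  "typeA a b c d e f 2 2 1 = e" "typeA a b c d e f 2 2 2 = f"
  unfolding typeA_def by simp_all

lemma mat2_in_isotropy_typeA_iff:
  "mat2 p q r s \<in> isotropy (typeA a b c d e f) \<longleftrightarrow>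
     p * s - q * r \<noteq> 0 \<and>
     a * p\<^sup>2 + 2 * c * p * r + e * r\<^sup>2 = a * p + b * q \<and>
     b * p\<^sup>2 + 2 * d * p * r + f * r\<^sup>2 = a * r + b * s \<and>
     a * p * q + c * (p * s + r * q) + e * r * s = c * p + d * q \<and>
     b * p * q + d * (p * s + r * q) + f * r * s = c * r + d * s \<and>
     a * q\<^sup>2 + 2 * c * q * s + e * s\<^sup>2 = e * p + f * q \<and>
     b * q\<^sup>2 + 2 * d * q * s + f * s\<^sup>2 = e * r + f * s"
proof (cases "p * s - q * r = 0")
  case True
  then show ?thesis
    by (simp add: isotropy_def invertible_det_nz det_2)
next
  case False
  then have "invertible (mat2 p q r s)"
    by (simp add: invertible_det_nz det_2)
  with False show ?thesis
    unfolding isotropy_def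
    by (simp add: pullback_eq_self_iff forall_2 sum_2 power2_eq_square) (auto simp: algebra_simps)
qed

lemma isotropy_M11: "isotropy (typeA (-1) 0 1 0 0 2) = {mat 1}"
proof (rule mat2_set_eqI, rule iffI)
  fix p q r s
  assume "mat2 p q r s \<in> isotropy (typeA (-1) 0 1 0 0 2)"
  then have det: "p * s - q * r \<noteq> 0" and e1: "- p\<^sup>2 + 2 * p * r = - p"
    and e2: "2 * r\<^sup>2 = - r" and e3: "- p * q + (p * s + r * q) = p"
    and e4: "2 * r * s = r" and e5: "2 * s\<^sup>2 = 2 * s"
    unfolding mat2_in_isotropy_typeA_iff by auto
  have r: "r = 0"
  proof (rule ccontr)
    assume "r \<noteq> 0"
    with e4 have "s = 1/2" by simp
    with e5 show False by (simp add: power2_eq_square)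
  qed
  have s: "s = 1" using e5 det r by (simp add: power2_eq_square)
  have p: "p = 1" using e1 det r by (simp add: power2_eq_square)
  show "mat2 p q r s \<in> {mat 1}" using e3 p r s by (simp add: mat_1_eq_mat2)
qed (simp add: mat_1_eq_mat2 mat2_in_isotropy_typeA_iff)

lemma isotropy_M21:
  assumes "c1 \<noteq> 0" "c1 \<noteq> -1" "c1 \<noteq> -1/2"
  shows "isotropy (typeA (-1) 0 c1 0 0 (1 + 2*c1)) = {mat 1}"
proof (rule mat2_set_eqI, rule iffI)
  fix p q r s
  assume "mat2 p q r s \<in> isotropy (typeA (-1) 0 c1 0 0 (1 + 2*c1))"
  then have det: "p * s - q * r \<noteq> 0" and e1: "- p\<^sup>2 + 2 * c1 * p * r = - p"
    and e2: "(1 + 2 * c1) * r\<^sup>2 = - r" and e3: "- p * q + c1 * (p * s + r * q) = c1 * p"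
    and e4: "(1 + 2 * c1) * r * s = c1 * r" and e5: "(1 + 2 * c1) * s\<^sup>2 = (1 + 2 * c1) * s"
    unfolding mat2_in_isotropy_typeA_iff by auto
  have s01: "s = 0 \<or> s = 1" using e5 assms by (simp add: power2_eq_square)
  have r: "r = 0"
  proof (rule ccontr)
    assume "r \<noteq> 0"
    with e4 have "(1 + 2 * c1) * s = c1" by simp
    with s01 assms show False by auto
  qed
  have s: "s = 1" using s01 det r by auto
  have p: "p = 1" using e1 det r by (simp add: power2_eq_square)
  show "mat2 p q r s \<in> {mat 1}" using e3 p r s assms by (simp add: mat_1_eq_mat2)
qed (simp add: mat_1_eq_mat2 mat2_in_isotropy_typeA_iff algebra_simps)

lemma isotropy_M21_half:
  "isotropy (typeA (-1) 0 (-1/2) 0 0 (1 + 2*(-1/2))) = {mat 1, mat2 1 1 0 (-1)}"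
proof (rule mat2_set_eqI, rule iffI)
  fix p q r s
  assume "mat2 p q r s \<in> isotropy (typeA (-1) 0 (-1/2) 0 0 (1 + 2*(-1/2)))"
  then have det: "p * s - q * r \<noteq> 0" and e1: "- p\<^sup>2 - p * r = - p" and r: "r = 0"
    and e3: "- p * q - (p * s + r * q) / 2 = - p / 2" and e5: "- q\<^sup>2 - q * s = 0"
    unfolding mat2_in_isotropy_typeA_iff by (auto simp: algebra_simps)
  have p: "p = 1" using e1 det r by (simp add: power2_eq_square)
  have s: "s = 1 - 2 * q" using e3 p r by simp
  have "q * (q + s) = 0" using e5 by (simp add: power2_eq_square algebra_simps)
  then have "q = 0 \<or> q + s = 0" by simp
  then show "mat2 p q r s \<in> {mat 1, mat2 1 1 0 (-1)}"
    using p r s by (auto simp: mat_1_eq_mat2)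
qed (auto simp: mat_1_eq_mat2 mat2_in_isotropy_typeA_iff)

lemma isotropy_M31:
  assumes "c1 \<noteq> 0" "c1 \<noteq> -1"
  shows "isotropy (typeA 0 0 c1 0 0 (1 + 2*c1)) = {mat2 (inverse v) 0 0 1 | v. v \<noteq> 0}"
proof (rule mat2_set_eqI, rule iffI)
  fix p q r s
  assume "mat2 p q r s \<in> isotropy (typeA 0 0 c1 0 0 (1 + 2*c1))"
  then have det: "p * s - q * r \<noteq> 0" and e1: "2 * c1 * p * r = 0"
    and e3: "c1 * (p * s + r * q) = c1 * p" and e5: "2 * c1 * q * s = (1 + 2 * c1) * q"
    unfolding mat2_in_isotropy_typeA_iff by auto
  have r: "r = 0"
  proof (rule ccontr)
    assume "r \<noteq> 0"
    with e1 assms have "p = 0" by simp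
    with det e3 assms show False by simp
  qed
  have s: "s = 1" using e3 det r assms by simp
  have q: "q = 0" using e5 s by (simp add: algebra_simps)
  show "mat2 p q r s \<in> {mat2 (inverse v) 0 0 1 | v. v \<noteq> 0}"
    using det q r s by (intro CollectI exI[of _ "inverse p"]) simp
qed (auto simp: mat2_in_isotropy_typeA_iff)

lemma isotropy_M41:
  assumes "c \<noteq> 0"
  shows "isotropy (typeA 0 0 1 0 c 2) = {mat2 1 (-w) 0 1 | w. True}"
proof (rule mat2_set_eqI, rule iffI)
  fix p q r s
  assume "mat2 p q r s \<in> isotropy (typeA 0 0 1 0 c 2)"
  then have det: "p * s - q * r \<noteq> 0" and e2: "2 * r\<^sup>2 = 0"
    and e3: "p * s + r * q = p" and e5: "2 * q * s + c * s\<^sup>2 = c * p + 2 * q"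
    unfolding mat2_in_isotropy_typeA_iff by auto
  have r: "r = 0" using e2 by simp
  have s: "s = 1" using e3 det r by simp
  have p: "p = 1" using e5 s assms by simp
  show "mat2 p q r s \<in> {mat2 1 (-w) 0 1 | w. True}"
    using p r s by (intro CollectI exI[of _ "- q"]) simp
qed (auto simp: mat2_in_isotropy_typeA_iff)

lemma isotropy_M41_zero:
  "isotropy (typeA 0 0 1 0 0 2) = {mat2 (inverse v) (- inverse v * w) 0 1 | v w. v \<noteq> 0}"
proof (rule mat2_set_eqI, rule iffI)
  fix p q r s
  assume "mat2 p q r s \<in> isotropy (typeA 0 0 1 0 0 2)"
  then have det: "p * s - q * r \<noteq> 0" and e2: "2 * r\<^sup>2 = 0" and e3: "p * s + r * q = p"
    unfolding mat2_in_isotropy_typeA_iff by auto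
  have r: "r = 0" using e2 by simp
  have s: "s = 1" using e3 det r by simp
  show "mat2 p q r s \<in> {mat2 (inverse v) (- inverse v * w) 0 1 | v w. v \<noteq> 0}"
    using det r s by (intro CollectI exI[of _ "inverse p"] exI[of _ "- q / p"]) simp
qed (auto simp: mat2_in_isotropy_typeA_iff)

lemma isotropy_M51:
  assumes "c \<noteq> 0"
  shows "isotropy (typeA 1 0 0 0 (1 + c^2) (2*c)) = {mat 1}"
proof (rule mat2_set_eqI, rule iffI)
  fix p q r s
  assume "mat2 p q r s \<in> isotropy (typeA 1 0 0 0 (1 + c^2) (2*c))"
  then have det: "p * s - q * r \<noteq> 0" and e1: "p\<^sup>2 + (1 + c\<^sup>2) * r\<^sup>2 = p"
    and e3: "p * q + (1 + c\<^sup>2) * r * s = 0" and e4: "2 * c * r * s = 0"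
    and e6: "2 * c * s\<^sup>2 = (1 + c\<^sup>2) * r + 2 * c * s"
    unfolding mat2_in_isotropy_typeA_iff by auto
  have r: "r = 0"
  proof (rule ccontr)
    assume "r \<noteq> 0"
    with e4 assms have "s = 0" by simp
    moreover have "1 + c\<^sup>2 > 0" by (simp add: add_pos_nonneg)
    ultimately show False using e6 \<open>r \<noteq> 0\<close> by simp
  qed
  have p: "p = 1" using e1 det r by (simp add: power2_eq_square)
  have q: "q = 0" using e3 p r by simp
  have s: "s = 1" using e6 r det assms by (simp add: power2_eq_square)
  show "mat2 p q r s \<in> {mat 1}" using p q r s by (simp add: mat_1_eq_mat2)
qed (simp add: mat_1_eq_mat2 mat2_in_isotropy_typeA_iff algebra_simps)

lemma isotropy_M51_zero:
  "isotropy (typeA 1 0 0 0 (1 + 0^2) (2*0)) = {mat 1, mat2 1 0 0 (-1)}"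
proof (rule mat2_set_eqI, rule iffI)
  fix p q r s
  assume "mat2 p q r s \<in> isotropy (typeA 1 0 0 0 (1 + 0^2) (2*0))"
  then have det: "p * s - q * r \<noteq> 0" and e1: "p\<^sup>2 + r\<^sup>2 = p" and r: "r = 0"
    and e3: "p * q + r * s = 0" and e5: "q\<^sup>2 + s\<^sup>2 = p"
    unfolding mat2_in_isotropy_typeA_iff by auto
  have p: "p = 1" using e1 det r by (simp add: power2_eq_square)
  have q: "q = 0" using e3 p r by simp
  have "s = 1 \<or> s = -1" using e5 p q power2_eq_1_iff by auto
  then show "mat2 p q r s \<in> {mat 1, mat2 1 0 0 (-1)}"
    using p q r by (auto simp: mat_1_eq_mat2)
qed (auto simp: mat_1_eq_mat2 mat2_in_isotropy_typeA_iff)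

theorem lemma4p2:
  fixes c c1 :: real
  assumes "c1 \<noteq> 0" and "c1 \<noteq> -1"
  shows "isotropy (typeA (-1) 0 1 0 0 2) = {mat 1}
   \<and> (c1 \<noteq> -1/2 \<longrightarrow> isotropy (typeA (-1) 0 c1 0 0 (1 + 2*c1)) = {mat 1})
   \<and> isotropy (typeA (-1) 0 (-1/2) 0 0 (1 + 2*(-1/2))) = {mat 1, mat2 1 1 0 (-1)}
   \<and> isotropy (typeA 0 0 c1 0 0 (1 + 2*c1)) = {mat2 (inverse v) 0 0 1 | v. v \<noteq> 0}
   \<and> (c \<noteq> 0 \<longrightarrow> isotropy (typeA 0 0 1 0 c 2) = {mat2 1 (-w) 0 1 | w. True})
   \<and> isotropy (typeA 0 0 1 0 0 2) = {mat2 (inverse v) (- inverse v * w) 0 1 | v w. v \<noteq> 0}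
   \<and> (c \<noteq> 0 \<longrightarrow> isotropy (typeA 1 0 0 0 (1 + c^2) (2*c)) = {mat 1})
   \<and> isotropy (typeA 1 0 0 0 (1 + 0^2) (2*0)) = {mat 1, mat2 1 0 0 (-1)}"
  using assms
  by (intro conjI impI; simp only: isotropy_M11 isotropy_M21 isotropy_M21_half isotropy_M31 isotropy_M41
      isotropy_M41_zero isotropy_M51 isotropy_M51_zero)

end
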